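(* Let $(X_k)_{k\ge1}$ be i.i.d. real random variables with $E X_1=0$ and $E|X_1|^{\beta}<\infty$ for some $\beta>1$, let $S_0=0$, $S_n=X_1+\dots+X_n$, and for fixed $\mu>0$ let $S_n(\mu)=S_n-n\mu$. Fix $m>0$ and $L\ge1$ such that $P(m<M_0\le (L+1)m)>0$, where $M_0=\sup_{n\ge0}S_n(\mu)$. Set $D_0=0$, $D_1=\inf\{n\ge 0: S_n(\mu)<-Lm\}$, $U_1=\inf\{n\ge D_1: S_n(\mu)>m+S_{D_1}(\mu)\}$, and for $j\ge2$ $$D_j=\inf\{n\ge U_{j-1}\mathbf 1(U_{j-1}<\infty)\vee D_{j-1}: S_n(\mu)<S_{D_{j-1}}(\mu)-Lm\},\qquad U_j=\inf\{n\ge D_j: S_n(\mu)-S_{D_j}(\mu)>m\},$$ with the convention $U_{j-1}\mathbf 1(U_{j-1}<\infty)=0$ when $U_{j-1}=\infty$ (and $\inf\emptyset=\infty$). Then, under $P_0$ (the walk started at $S_0=0$), $$P_0\Big(\lim_{n\to\infty}D_n=\infty\Big)=1,\qquad P_0(D_n<\infty)=1\ \text{ for all } n\ge1,$$ and $$P_0(U_n=\infty\ \text{for infinitely many } n)=1.$$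
   Context: $P_a$ denotes the law of the random walk started at $S_0=a$. *)

theory Defs
  imports "HOL-Probability.Probability"
begin

definition Sdrift :: "(nat \<Rightarrow> 'a \<Rightarrow> real) \<Rightarrow> real \<Rightarrow> nat \<Rightarrow> 'a \<Rightarrow> real" where
  "Sdrift X \<mu> n \<omega> = (\<Sum>k\<in>{1..n}. X k \<omega>) - real n * \<mu>"

definition Msup :: "(nat \<Rightarrow> 'a \<Rightarrow> real) \<Rightarrow> real \<Rightarrow> 'a \<Rightarrow> ereal" where
  "Msup X \<mu> \<omega> = (SUP n. ereal (Sdrift X \<mu> n \<omega>))"

definition hit :: "nat \<Rightarrow> (nat \<Rightarrow> bool) \<Rightarrow> enat" where
  "hit a P = (if \<exists>n\<ge>a. P n then enat (LEAST n. a \<le> n \<and> P n) else \<infinity>)"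

text \<open>DU s L m j = (D_j, U_j) for the path s (s n = S_n(mu)).
  D_0 = 0; U_0 is an unused dummy value. For D_{j-1} = \<infinity> the infimum is over
  an empty set, so D_j = \<infinity>; likewise U_j = \<infinity> if D_j = \<infinity>.\<close>
fun DU :: "(nat \<Rightarrow> real) \<Rightarrow> real \<Rightarrow> real \<Rightarrow> nat \<Rightarrow> enat \<times> enat" where
  "DU s L m 0 = (0, \<infinity>)"
| "DU s L m (Suc j) =
     (let d = fst (DU s L m j); u = snd (DU s L m j);
          d' = (if j = 0 then hit 0 (\<lambda>n. s n < - L * m)
                else (case d of
                        \<infinity> \<Rightarrow> \<infinity>
                      | enat k \<Rightarrow> hit (max (if u < \<infinity> then the_enat u else 0) k)
                                      (\<lambda>n. s n < s k - L * m)));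
          u' = (case d' of \<infinity> \<Rightarrow> \<infinity> | enat k \<Rightarrow> hit k (\<lambda>n. s n - s k > m))
      in (d', u'))"

definition Dtime :: "(nat \<Rightarrow> real) \<Rightarrow> real \<Rightarrow> real \<Rightarrow> nat \<Rightarrow> enat" where
  "Dtime s L m j = fst (DU s L m j)"

definition Utime :: "(nat \<Rightarrow> real) \<Rightarrow> real \<Rightarrow> real \<Rightarrow> nat \<Rightarrow> enat" where
  "Utime s L m j = snd (DU s L m j)"

end

theory Submission
  imports Defs
begin

text \<open>
  The walk S_n(\<mu>) = S_n - n \<mu> drifts linearly to -\<infinity>. A one-sided strong law gives
  S_n(\<mu>) \<le> - n \<mu> / 2 eventually, almost surely: split X_k into a bounded part, handled by
  Hoeffding's inequality and Borel-Cantelli, and a nonnegative part with a finite moment of order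
  b > 1, handled by truncation at n, Chebyshev's inequality and Borel-Cantelli along n = 2^j.
  Consequently the walk is bounded above and falls below every level after every time, so all
  D_j are finite and strictly increasing.

  If U_j were finite for all j \<ge> J, the descent times from D_J on would be obtained by repeating
  "rise by more than m, then fall below the previous level minus L m". By the Markov property at the
  fixed values of the previous descent time, K such rises have probability at most q^K, where
  q = P(sup_n S_n(\<mu>) > m). Finally q < 1: the supremum is finite almost surely, so it is at most
  some K with positive probability, and requiring the first steps to be X_k \<le> 0 lowers the
  supremum by \<mu> per step at the cost of a positive factor P(X_1 \<le> 0).
\<close>

lemma hit_eq_enatD:
  assumes "hit a P = enat v"
  shows "a \<le> v" "P v" "\<And>n. a \<le> n \<Longrightarrow> n < v \<Longrightarrow> \<not> P n"
proof -
  have ex: "\<exists>n\<ge>a. P n" and v: "v = (LEAST n. a \<le> n \<and> P n)"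
    using assms by (auto simp: hit_def split: if_splits)
  from ex have "a \<le> v \<and> P v" unfolding v by (metis (mono_tags, lifting) LeastI)
  then show "a \<le> v" "P v" by auto
  show "\<And>n. a \<le> n \<Longrightarrow> n < v \<Longrightarrow> \<not> P n" unfolding v using not_less_Least by blast
qed

lemma hit_eq_enatI: "a \<le> n \<Longrightarrow> P n \<Longrightarrow> \<exists>v. hit a P = enat v"
  by (auto simp: hit_def)

lemma hit_cong_upto:
  assumes "hit a P = enat v" and "\<And>n. n \<le> v \<Longrightarrow> P n = Q n"
  shows "hit a Q = enat v"
proof -
  note v = hit_eq_enatD[OF assms(1)]
  have "(LEAST n. a \<le> n \<and> Q n) = v"
    using v assms(2) by (intro Least_equality) (auto, meson leI less_imp_le)
  then show ?thesis using v assms(2) by (auto simp: hit_def)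
qed

lemma measurable_hit[measurable]:
  assumes [measurable]: "\<And>n. Measurable.pred N (\<lambda>x. P x n)"
  shows "(\<lambda>x. hit a (P x)) \<in> measurable N (count_space UNIV)"
  unfolding hit_def by measurable

section \<open>The descent times\<close>

lemma Dtime_0: "Dtime s L m 0 = 0"
  by (simp add: Dtime_def)

lemma Dtime_Suc_0: "Dtime s L m (Suc 0) = hit 0 (\<lambda>n. s n < - L * m)"
  by (simp add: Dtime_def Let_def)

lemma Dtime_Suc:
  "j \<noteq> 0 \<Longrightarrow> Dtime s L m (Suc j) = (case Dtime s L m j of \<infinity> \<Rightarrow> \<infinity>
     | enat k \<Rightarrow> hit (max (if Utime s L m j < \<infinity> then the_enat (Utime s L m j) else 0) k)
                     (\<lambda>n. s n < s k - L * m))"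
  unfolding Utime_def Dtime_def by (simp only: DU.simps Let_def fst_conv snd_conv if_False)

lemma Utime_Suc:
  "Utime s L m (Suc j) = (case Dtime s L m (Suc j) of \<infinity> \<Rightarrow> \<infinity> | enat k \<Rightarrow> hit k (\<lambda>n. s n - s k > m))"
  unfolding Utime_def Dtime_def by (simp only: DU.simps Let_def fst_conv snd_conv)

lemma Dtime_finite_if_Utime_finite:
  "j \<noteq> 0 \<Longrightarrow> Utime s L m j \<noteq> \<infinity> \<Longrightarrow> \<exists>k. Dtime s L m j = enat k"
  by (cases j; cases "Dtime s L m j") (auto simp: Utime_Suc)

lemma Dtime_Suc_gt:
  assumes s0: "s 0 = 0" and Lm: "L * m > 0" and unbounded_below: "\<And>c a. \<exists>n\<ge>a. s n < c"
  shows "\<exists>k. Dtime s L m (Suc j) = enat k \<and> Dtime s L m j < enat k"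
proof (induction j)
  case 0
  obtain v where v: "hit 0 (\<lambda>n. s n < - L * m) = enat v"
    using unbounded_below hit_eq_enatI by (metis le0)
  have "v \<noteq> 0" using hit_eq_enatD(2)[OF v] s0 Lm by (cases v) auto
  then show ?case using v by (auto simp: Dtime_0 Dtime_Suc_0 zero_enat_def)
next
  case (Suc j)
  then obtain k where k: "Dtime s L m (Suc j) = enat k" by auto
  define a where "a = max (if Utime s L m (Suc j) < \<infinity> then the_enat (Utime s L m (Suc j)) else 0) k"
  obtain v where v: "hit a (\<lambda>n. s n < s k - L * m) = enat v"
    using unbounded_below hit_eq_enatI by metis
  have "k \<le> a" by (simp add: a_def)
  then have "k < v" using hit_eq_enatD(1,2)[OF v] Lm by (cases "v = k") auto
  then show ?case using k v by (simp add: Dtime_Suc a_def)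
qed

lemma Dtime_finite:
  assumes "s 0 = 0" and "L * m > 0" and "\<And>c a. \<exists>n\<ge>a. s n < c" and "n \<ge> 1"
  shows "Dtime s L m n < \<infinity>"
proof -
  obtain j where "n = Suc j" using \<open>n \<ge> 1\<close> by (cases n) auto
  then show ?thesis using Dtime_Suc_gt[OF assms(1-3), of j] by auto
qed

lemma Dtime_tendsto_infinity:
  assumes "s 0 = 0" and "L * m > 0" and "\<And>c a. \<exists>n\<ge>a. s n < c"
  shows "(\<lambda>n. Dtime s L m n) \<longlonglongrightarrow> \<infinity>"
proof (rule order_tendstoI)
  have ge: "enat n \<le> Dtime s L m n" for n
  proof (induction n)
    case (Suc n)
    then show ?case using Dtime_Suc_gt[OF assms, of n]
      by (metis Suc_ile_eq order_le_less_trans)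
  qed (simp add: Dtime_0 zero_enat_def)
  fix a :: enat assume "a < \<infinity>"
  then obtain k where "a = enat k" by (cases a) auto
  then have "\<forall>n\<ge>Suc k. a < Dtime s L m n"
    using ge by (metis Suc_le_eq enat_ord_simps(2) order_less_le_trans)
  then show "\<forall>\<^sub>F n in sequentially. a < Dtime s L m n"
    unfolding eventually_sequentially by blast
qed simp

text \<open>Once U_J, U_{J+1}, ... are all finite, D_{J+1}, D_{J+2}, ... arise from D_J by iterating
  descent_step (lemma Dtime_eq_descent_iter). The value None records that one of its two waits
  never ends.\<close>

definition descent_step :: "(nat \<Rightarrow> real) \<Rightarrow> real \<Rightarrow> real \<Rightarrow> nat \<Rightarrow> nat option" where
  "descent_step s L m d = (case hit d (\<lambda>n. s n - s d > m) of \<infinity> \<Rightarrow> None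
     | enat u \<Rightarrow> (case hit u (\<lambda>n. s n < s d - L * m) of \<infinity> \<Rightarrow> None | enat d' \<Rightarrow> Some d'))"

fun descent_iter :: "(nat \<Rightarrow> real) \<Rightarrow> real \<Rightarrow> real \<Rightarrow> nat \<Rightarrow> nat \<Rightarrow> nat option" where
  "descent_iter s L m d 0 = Some d"
| "descent_iter s L m d (Suc i) = Option.bind (descent_iter s L m d i) (descent_step s L m)"

lemma descent_step_SomeE:
  assumes "descent_step s L m d = Some d'"
  obtains u where "hit d (\<lambda>n. s n - s d > m) = enat u" "hit u (\<lambda>n. s n < s d - L * m) = enat d'"
  using assms by (auto simp: descent_step_def split: enat.splits)

lemma descent_step_cong:
  assumes "descent_step s L m d = Some d'" and "\<And>n. n \<le> d' \<Longrightarrow> s n = t n"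
  shows "descent_step t L m d = Some d'"
proof -
  obtain u where u: "hit d (\<lambda>n. s n - s d > m) = enat u"
    and d': "hit u (\<lambda>n. s n < s d - L * m) = enat d'"
    using assms(1) by (rule descent_step_SomeE)
  have "d \<le> d'" "u \<le> d'" using hit_eq_enatD(1)[OF u] hit_eq_enatD(1)[OF d'] by simp_all
  then have "hit d (\<lambda>n. t n - t d > m) = enat u" "hit u (\<lambda>n. t n < t d - L * m) = enat d'"
    using assms(2) by (intro hit_cong_upto[OF u] hit_cong_upto[OF d']; simp)+
  then show ?thesis by (simp add: descent_step_def)
qed

lemma descent_iter_cong:
  assumes "descent_iter s L m d i = Some e" and "\<And>n. n \<le> e \<Longrightarrow> s n = t n"
  shows "descent_iter t L m d i = Some e"
  using assms
proof (induction i arbitrary: e)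
  case (Suc i)
  then obtain e0 where e0: "descent_iter s L m d i = Some e0" and e: "descent_step s L m e0 = Some e"
    by (auto split: Option.bind_splits)
  have "e0 \<le> e"
    using e by (elim descent_step_SomeE) (metis hit_eq_enatD(1) order_trans)
  then show ?case using Suc.IH[OF e0] Suc.prems(2) descent_step_cong[OF e] by simp
qed simp

lemma Dtime_eq_descent_iter:
  assumes "J \<noteq> 0" and D: "Dtime s L m J = enat d" and U: "\<forall>j\<ge>J. Utime s L m j \<noteq> \<infinity>"
  shows "\<exists>e. Dtime s L m (J + K) = enat e \<and> descent_iter s L m d K = Some e"
proof (induction K)
  case (Suc K)
  then obtain e where e: "Dtime s L m (J + K) = enat e" "descent_iter s L m d K = Some e"
    by auto
  obtain j where j: "J + K = Suc j" using \<open>J \<noteq> 0\<close> by (cases "J + K") auto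
  have "Utime s L m (J + K) = hit e (\<lambda>n. s n - s e > m)"
    using e(1) unfolding j Utime_Suc by simp
  moreover obtain u where "Utime s L m (J + K) = enat u"
    using U[rule_format, of "J + K"] by (cases "Utime s L m (J + K)") auto
  ultimately have u: "hit e (\<lambda>n. s n - s e > m) = enat u" "Utime s L m (J + K) = enat u"
    by simp_all
  obtain e' where e': "Dtime s L m (Suc (J + K)) = enat e'"
    using U[rule_format, of "Suc (J + K)"] Dtime_finite_if_Utime_finite[of "Suc (J + K)" s L m]
    by auto
  have "e \<le> u" using hit_eq_enatD(1)[OF u(1)] .
  then have "hit u (\<lambda>n. s n < s e - L * m) = enat e'"
    using e(1) u(2) e' \<open>J \<noteq> 0\<close> Dtime_Suc[of "J + K" s L m] by (simp add: max_def)
  then have "descent_step s L m e = Some e'" using u(1) by (simp add: descent_step_def)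
  then show ?case using e e' by auto
qed (use D in simp)

lemma measurable_descent_step:
  assumes [measurable]: "\<And>k. (\<lambda>x. f x k) \<in> borel_measurable N"
  shows "(\<lambda>x. descent_step (f x) L m d) \<in> measurable N (count_space UNIV)"
proof -
  define G where "G h x = (case h of \<infinity> \<Rightarrow> None | enat u \<Rightarrow>
    (case hit u (\<lambda>n. f x n < f x d - L * m) of \<infinity> \<Rightarrow> None | enat d' \<Rightarrow> Some d'))" for h x
  have "(\<lambda>x. G h x) \<in> measurable N (count_space UNIV)" for h
  proof (cases h)
    case (enat u)
    have "(\<lambda>x. hit u (\<lambda>n. f x n < f x d - L * m)) \<in> measurable N (count_space UNIV)"
      by measurable
    from measurable_compose[OF this measurable_count_space] show ?thesis
      by (simp add: G_def enat)
  qed (simp add: G_def)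
  moreover have "(\<lambda>x. hit d (\<lambda>n. f x n - f x d > m)) \<in> measurable N (count_space UNIV)"
    by measurable
  ultimately have "(\<lambda>x. G (hit d (\<lambda>n. f x n - f x d > m)) x) \<in> measurable N (count_space UNIV)"
    by (rule measurable_compose_countable') simp
  then show ?thesis by (simp add: descent_step_def G_def)
qed

lemma measurable_descent_iter:
  assumes "\<And>k. (\<lambda>x. f x k) \<in> borel_measurable N"
  shows "(\<lambda>x. descent_iter (f x) L m d i) \<in> measurable N (count_space UNIV)"
proof (induction i)
  case (Suc i)
  have "(\<lambda>x. Option.bind opt (descent_step (f x) L m)) \<in> measurable N (count_space UNIV)"
    for opt
    using measurable_descent_step[OF assms] by (cases opt) simp_all
  from measurable_compose_countable'[OF this Suc.IH] show ?case by simp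
qed simp

lemma frequently_less_if_eventually_le_neg_linear:
  fixes s :: "nat \<Rightarrow> real"
  assumes "c > 0" and "\<forall>\<^sub>F n in sequentially. s n \<le> - c * real n"
  shows "\<exists>n\<ge>a. s n < y"
proof -
  obtain n0 :: nat where "\<bar>y\<bar> / c < real n0" using reals_Archimedean2 by blast
  then have "\<forall>\<^sub>F n in sequentially. s n \<le> - c * real n \<and> n \<ge> max a n0"
    using assms(2) by (simp add: eventually_conj_iff eventually_ge_at_top)
  then obtain n where n: "s n \<le> - c * real n" "n \<ge> max a n0"
    unfolding eventually_sequentially by blast
  have "\<bar>y\<bar> < c * real n0"
    using \<open>\<bar>y\<bar> / c < real n0\<close> \<open>c > 0\<close> by (simp add: pos_divide_less_eq mult.commute)
  also have "\<dots> \<le> c * real n"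
    using n(2) \<open>c > 0\<close> by (intro mult_left_mono) auto
  finally show ?thesis using n by (intro exI[of _ n]) auto
qed

lemma bdd_above_if_eventually_le_neg_linear:
  fixes s :: "nat \<Rightarrow> real"
  assumes "c > 0" and "\<forall>\<^sub>F n in sequentially. s n \<le> - c * real n"
  shows "bdd_above (range s)"
proof -
  obtain N where N: "\<And>n. n \<ge> N \<Longrightarrow> s n \<le> - c * real n"
    using assms(2) unfolding eventually_sequentially by blast
  have "s n \<le> max 0 (Max (s ` {..N}))" for n
  proof (cases "n \<le> N")
    case False
    have "0 \<le> c * real n" using \<open>c > 0\<close> by simp
    then have "s n \<le> 0" using N[of n] False by linarith
    then show ?thesis by simp
  qed (simp add: le_max_iff_disj)
  then show ?thesis by (intro bdd_aboveI) blast
qed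

lemma min_square_le_powr:
  fixes y T b :: real
  assumes "0 \<le> y" and "0 < T" and "0 \<le> b" and "b \<le> 2"
  shows "(min y T)\<^sup>2 \<le> T powr (2 - b) * y powr b"
proof (cases "min y T = 0")
  case False
  define z where "z = min y T"
  have z: "0 < z" "z \<le> T" "z \<le> y" using False assms unfolding z_def by auto
  have "z\<^sup>2 = z powr (2 - b) * z powr b"
    using z(1) by (simp add: powr_add[symmetric] powr_realpow)
  also have "\<dots> \<le> T powr (2 - b) * y powr b"
    using z assms by (intro mult_mono powr_mono2) auto
  finally show ?thesis unfolding z_def .
qed simp

lemma exists_power2_between:
  fixes n :: nat
  assumes "n \<ge> 1"
  shows "\<exists>j. n \<le> 2 ^ j \<and> 2 ^ j < 2 * n"
proof -
  obtain i where i: "2 ^ i \<le> n" "n < 2 ^ (i + 1)" using ex_power_ivl1[of 2 n] assms by auto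
  show ?thesis
  proof (cases "2 ^ i = n")
    case False
    then show ?thesis using i by (intro exI[of _ "i + 1"]) auto
  qed (use assms in auto)
qed

lemma sum_le_twice_if_dyadic_sums_le:
  fixes a :: "nat \<Rightarrow> real"
  assumes nonneg: "\<And>k. a k \<ge> 0" and "c \<ge> 0"
    and dyadic: "\<And>j. j \<ge> J \<Longrightarrow> (\<Sum>k\<in>{1..2^j}. a k) \<le> real (2 ^ j) * c"
    and "n \<ge> 2 ^ J"
  shows "(\<Sum>k\<in>{1..n}. a k) \<le> 2 * real n * c"
proof -
  have "n \<ge> 1" using \<open>n \<ge> 2 ^ J\<close> one_le_power[of "2::nat" J] by linarith
  then obtain j where j: "n \<le> 2 ^ j" "2 ^ j < 2 * n" using exists_power2_between by blast
  then have "(2::nat) ^ J \<le> 2 ^ j" using \<open>n \<ge> 2 ^ J\<close> by linarith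
  then have "J \<le> j" using power_le_imp_le_exp[of 2 J j] by simp
  have "(\<Sum>k\<in>{1..n}. a k) \<le> (\<Sum>k\<in>{1..2^j}. a k)"
    using j nonneg by (intro sum_mono2) auto
  also have "\<dots> \<le> real (2 ^ j) * c"
    using dyadic[OF \<open>J \<le> j\<close>] .
  also have "\<dots> \<le> 2 * real n * c"
  proof (rule mult_right_mono)
    have "2 ^ j \<le> 2 * n" using j(2) by simp
    then show "real (2 ^ j) \<le> 2 * real n" by (metis of_nat_le_iff of_nat_mult of_nat_numeral)
  qed (use \<open>c \<ge> 0\<close> in simp)
  finally show ?thesis .
qed

lemma powr_le_1_plus_powr:
  fixes w x b \<beta> :: real
  assumes "0 \<le> w" and "w \<le> \<bar>x\<bar>" and "0 < b" and "b \<le> \<beta>"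
  shows "w powr b \<le> 1 + \<bar>x\<bar> powr \<beta>"
proof -
  have "w powr b \<le> \<bar>x\<bar> powr b" using assms by (intro powr_mono2) auto
  also have "\<dots> \<le> 1 + \<bar>x\<bar> powr \<beta>"
  proof (cases "\<bar>x\<bar> \<le> 1")
    case True
    then have "\<bar>x\<bar> powr b \<le> 1 powr b" using assms by (intro powr_mono2) auto
    then show ?thesis by (simp add: add_increasing2)
  next
    case False
    then show ?thesis using assms by (simp add: add_increasing powr_mono)
  qed
  finally show ?thesis .
qed

definition truncate :: "real \<Rightarrow> real \<Rightarrow> real" where
  "truncate c x = max (- c) (min x c)"

definition excess :: "real \<Rightarrow> real \<Rightarrow> real" where
  "excess c x = max 0 (x - c)"

lemma truncate_range: "0 \<le> c \<Longrightarrow> truncate c x \<in> {- c..c}"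
  by (auto simp: truncate_def)

lemma abs_truncate_le: "0 \<le> c \<Longrightarrow> \<bar>truncate c x\<bar> \<le> \<bar>x\<bar>"
  by (auto simp: truncate_def)

lemma excess_nonneg: "0 \<le> excess c x"
  by (simp add: excess_def)

lemma excess_le_abs: "0 \<le> c \<Longrightarrow> excess c x \<le> \<bar>x\<bar>"
  by (auto simp: excess_def)

lemma le_truncate_plus_excess: "0 \<le> c \<Longrightarrow> x \<le> truncate c x + excess c x"
  by (auto simp: truncate_def excess_def)

lemma measurable_truncate[measurable]: "truncate c \<in> borel_measurable borel"
  unfolding truncate_def[abs_def] by measurable

lemma measurable_excess[measurable]: "excess c \<in> borel_measurable borel"
  unfolding excess_def[abs_def] by measurable

lemma eventually_truncate_eq: "\<forall>\<^sub>F n in sequentially. truncate (real n) x = x \<and> excess (real n) x = 0"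
  using eventually_ge_at_top[of "nat \<lceil>\<bar>x\<bar>\<rceil>"]
  by eventually_elim (auto simp: truncate_def excess_def nat_ceiling_le_eq)

lemma (in prob_space) indep_sets_reindex:
  assumes "indep_sets F (f ` I)" and "inj_on f I"
  shows "indep_sets (\<lambda>i. F (f i)) I"
proof (rule indep_setsI)
  show "F (f i) \<subseteq> events" if "i \<in> I" for i
    using assms(1) that unfolding indep_sets_def by auto
  fix A J assume J: "J \<noteq> {}" "J \<subseteq> I" "finite J" and A: "\<forall>j\<in>J. A j \<in> F (f j)"
  have inj: "inj_on f J" using assms(2) J(2) by (rule inj_on_subset)
  have "prob (\<Inter>k\<in>f ` J. A (the_inv_into J f k)) = (\<Prod>k\<in>f ` J. prob (A (the_inv_into J f k)))"
    using J A inj by (intro indep_setsD[OF assms(1)]) (auto simp: the_inv_into_f_f)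
  then show "prob (\<Inter>j\<in>J. A j) = (\<Prod>j\<in>J. prob (A j))"
    using inj by (simp add: prod.reindex the_inv_into_f_f image_image)
qed

lemma (in prob_space) indep_vars_reindex:
  assumes "indep_vars M' X (f ` I)" and "inj_on f I"
  shows "indep_vars (\<lambda>i. M' (f i)) (\<lambda>i. X (f i)) I"
  using assms indep_sets_reindex[of "\<lambda>i. {X i -` A \<inter> space M |A. A \<in> sets (M' i)}" f I]
  unfolding indep_vars_def2 by auto

lemma (in prob_space) prob_nonpos_gt_0:
  fixes Y :: "'a \<Rightarrow> real"
  assumes "integrable M Y" and "expectation Y = 0"
  shows "prob {\<omega>\<in>space M. Y \<omega> \<le> 0} > 0"
proof (rule ccontr)
  assume "\<not> prob {\<omega>\<in>space M. Y \<omega> \<le> 0} > 0"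
  moreover have [measurable]: "Y \<in> borel_measurable M"
    using assms(1) by simp
  then have "{\<omega>\<in>space M. Y \<omega> \<le> 0} \<in> events"
    using borel_measurable_le[of Y M "\<lambda>_. 0"] by simp
  ultimately have "{\<omega>\<in>space M. Y \<omega> \<le> 0} \<in> null_sets M"
    using measure_nonneg[of M "{\<omega>\<in>space M. Y \<omega> \<le> 0}"]
    by (intro null_setsI) (auto simp: emeasure_eq_measure simp del: measure_nonneg)
  then have pos: "AE \<omega> in M. Y \<omega> > 0"
    by (rule AE_I') auto
  then have "AE \<omega> in M. Y \<omega> \<ge> 0"
    by eventually_elim simp
  then have "AE \<omega> in M. Y \<omega> = 0"
    using integral_nonneg_eq_0_iff_AE[OF assms(1)] assms(2) by simp
  with pos have "AE \<omega> in M. False" by eventually_elim simp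
  then show False by simp
qed

lemma (in prob_space) prob_gt_le_moment:
  fixes Y :: "'a \<Rightarrow> real"
  assumes "random_variable borel Y" and "integrable M (\<lambda>\<omega>. Y \<omega> powr b)" and "b > 0" and "T > 0"
  shows "prob {\<omega>\<in>space M. Y \<omega> > T} \<le> expectation (\<lambda>\<omega>. Y \<omega> powr b) / T powr b"
proof -
  have "prob {\<omega>\<in>space M. Y \<omega> > T} \<le> prob {\<omega>\<in>space M. Y \<omega> powr b \<ge> T powr b}"
  proof (rule finite_measure_mono)
    show "{\<omega>\<in>space M. Y \<omega> > T} \<subseteq> {\<omega>\<in>space M. Y \<omega> powr b \<ge> T powr b}"
      using assms(3,4) by (auto intro: powr_mono2)
    show "{\<omega>\<in>space M. Y \<omega> powr b \<ge> T powr b} \<in> events"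
      using borel_measurable_le[OF borel_measurable_const borel_measurable_integrable[OF assms(2)]] .
  qed
  also have "\<dots> \<le> expectation (\<lambda>\<omega>. Y \<omega> powr b) / T powr b"
    using assms by (intro integral_Markov_inequality_measure[where A="space M"]) auto
  finally show ?thesis .
qed

lemma (in prob_space) variance_min_le_moment:
  fixes Y :: "'a \<Rightarrow> real"
  assumes "random_variable borel Y" and "\<And>\<omega>. Y \<omega> \<ge> 0" and "integrable M (\<lambda>\<omega>. Y \<omega> powr b)"
    and "0 \<le> b" and "b \<le> 2" and "T > 0"
  shows "variance (\<lambda>\<omega>. min (Y \<omega>) T) \<le> T powr (2 - b) * expectation (\<lambda>\<omega>. Y \<omega> powr b)"
proof -
  have bounded: "\<bar>min (Y \<omega>) T\<bar> \<le> T" "(min (Y \<omega>) T)\<^sup>2 \<le> T\<^sup>2" for \<omega>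
    using assms(2)[of \<omega>] \<open>T > 0\<close> by (auto simp: abs_le_square_iff[symmetric])
  have int: "integrable M (\<lambda>\<omega>. min (Y \<omega>) T)"
    using assms(1) bounded(1) by (intro integrable_const_bound[where B=T]) auto
  have int2: "integrable M (\<lambda>\<omega>. (min (Y \<omega>) T)\<^sup>2)"
    using assms(1) bounded(2) by (intro integrable_const_bound[where B="T\<^sup>2"]) auto
  have "variance (\<lambda>\<omega>. min (Y \<omega>) T) \<le> expectation (\<lambda>\<omega>. (min (Y \<omega>) T)\<^sup>2)"
    using variance_eq[OF int int2] by simp
  also have "\<dots> \<le> expectation (\<lambda>\<omega>. T powr (2 - b) * Y \<omega> powr b)"
    using int2 assms min_square_le_powr by (intro integral_mono) auto
  finally show ?thesis by simp
qed

lemma (in prob_space) variance_sum_indep: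
  fixes Y :: "'i \<Rightarrow> 'a \<Rightarrow> real"
  assumes "finite I" and indep: "indep_vars (\<lambda>_. borel) Y I"
    and bounded: "\<And>i \<omega>. i \<in> I \<Longrightarrow> \<bar>Y i \<omega>\<bar> \<le> T"
  shows "variance (\<lambda>\<omega>. \<Sum>i\<in>I. Y i \<omega>) = (\<Sum>i\<in>I. variance (Y i))"
proof -
  define Yc where "Yc i \<omega> = Y i \<omega> - expectation (Y i)" for i \<omega>
  have rv: "Y i \<in> borel_measurable M" if "i \<in> I" for i
    using indep that unfolding indep_vars_def by auto
  have int: "integrable M (Y i)" if "i \<in> I" for i
    using that rv bounded by (intro integrable_const_bound[where B=T]) auto
  have "\<bar>Yc i \<omega>\<bar> \<le> T + \<bar>expectation (Y i)\<bar>" if "i \<in> I" for i \<omega>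
    using bounded[OF that, of \<omega>] unfolding Yc_def by linarith
  then have int_prod: "integrable M (\<lambda>\<omega>. Yc i \<omega> * Yc j \<omega>)" if "i \<in> I" "j \<in> I" for i j
    using that rv
    by (intro integrable_const_bound[where B="(T + \<bar>expectation (Y i)\<bar>) * (T + \<bar>expectation (Y j)\<bar>)"])
       (auto simp: abs_mult Yc_def intro!: AE_I2 mult_mono intro: order_trans[OF abs_ge_zero])
  have "expectation (\<lambda>\<omega>. Yc i \<omega> * Yc j \<omega>) = 0" if "i \<in> I" "j \<in> I" "i \<noteq> j" for i j
  proof -
    have "indep_vars (\<lambda>_. borel) Yc {i, j}"
      unfolding Yc_def using that
      by (intro indep_vars_compose2[OF indep_vars_subset[OF indep]]) auto
    then have "expectation (\<lambda>\<omega>. \<Prod>k\<in>{i, j}. Yc k \<omega>) = (\<Prod>k\<in>{i, j}. expectation (Yc k))"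
      using that int by (intro indep_vars_lebesgue_integral) (auto simp: Yc_def[abs_def])
    then show ?thesis using that int by (simp add: Yc_def[abs_def] prob_space)
  qed
  then have "(\<Sum>j\<in>I. expectation (\<lambda>\<omega>. Yc i \<omega> * Yc j \<omega>)) = expectation (\<lambda>\<omega>. (Yc i \<omega>)\<^sup>2)"
    if "i \<in> I" for i
    using that \<open>finite I\<close> by (subst sum.remove[of _ i]) (auto simp: power2_eq_square intro!: sum.neutral)
  moreover have "expectation (\<lambda>\<omega>. \<Sum>i\<in>I. Y i \<omega>) = (\<Sum>i\<in>I. expectation (Y i))"
    using int by (intro Bochner_Integration.integral_sum) auto
  then have "variance (\<lambda>\<omega>. \<Sum>i\<in>I. Y i \<omega>) = expectation (\<lambda>\<omega>. \<Sum>i\<in>I. \<Sum>j\<in>I. Yc i \<omega> * Yc j \<omega>)"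
    by (simp add: Yc_def power2_eq_square sum_product flip: sum_subtractf)
  ultimately show ?thesis
    using int_prod by (simp add: Bochner_Integration.integral_sum Yc_def)
qed

lemma (in prob_space) integrable_excess_powr:
  fixes Y :: "'a \<Rightarrow> real" and b \<beta> c :: real
  assumes "random_variable borel Y" and "integrable M (\<lambda>\<omega>. \<bar>Y \<omega>\<bar> powr \<beta>)"
    and "0 < b" and "b \<le> \<beta>" and "c \<ge> 0"
  shows "integrable M (\<lambda>\<omega>. excess c (Y \<omega>) powr b)"
proof (rule Bochner_Integration.integrable_bound[where f="\<lambda>\<omega>. 1 + \<bar>Y \<omega>\<bar> powr \<beta>"])
  show "(\<lambda>\<omega>. excess c (Y \<omega>) powr b) \<in> borel_measurable M"
    using measurable_compose[OF assms(1) measurable_excess] by measurable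
  show "AE \<omega> in M. norm (excess c (Y \<omega>) powr b) \<le> norm (1 + \<bar>Y \<omega>\<bar> powr \<beta>)"
    using assms(3-5) by (intro AE_I2) (simp add: powr_le_1_plus_powr excess_nonneg excess_le_abs)
qed (use assms(2) in simp)

section \<open>A one-sided law of large numbers\<close>

locale iid_sequence = prob_space +
  fixes X :: "nat \<Rightarrow> 'a \<Rightarrow> real"
  assumes indep: "indep_vars (\<lambda>_. borel) X {1..}"
    and ident: "\<And>k. k \<ge> 1 \<Longrightarrow> distr M borel (X k) = distr M borel (X 1)"
begin

lemma random_variable_X: "k \<ge> 1 \<Longrightarrow> random_variable borel (X k)"
  using indep unfolding indep_vars_def by auto

lemma indep_vars_compose_X:
  "I \<subseteq> {1..} \<Longrightarrow> g \<in> borel_measurable borel \<Longrightarrow> indep_vars (\<lambda>_. borel) (\<lambda>k \<omega>. g (X k \<omega>)) I"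
  using indep_vars_compose2[OF indep_vars_subset[OF indep], of I "\<lambda>_. g" "\<lambda>_. borel"] by auto

lemma distr_compose_X:
  fixes g :: "real \<Rightarrow> real"
  assumes "k \<ge> 1" and "g \<in> borel_measurable borel"
  shows "distr M borel (\<lambda>\<omega>. g (X k \<omega>)) = distr M borel (\<lambda>\<omega>. g (X 1 \<omega>))"
  using distr_distr[OF assms(2) random_variable_X[OF assms(1)]]
    distr_distr[OF assms(2) random_variable_X[of 1]] ident[OF assms(1)]
  by (simp add: comp_def)

lemma expectation_compose_X:
  fixes g :: "real \<Rightarrow> real"
  assumes "k \<ge> 1" and "g \<in> borel_measurable borel"
  shows "expectation (\<lambda>\<omega>. g (X k \<omega>)) = expectation (\<lambda>\<omega>. g (X 1 \<omega>))"
  using integral_distr[OF random_variable_X[OF assms(1)] assms(2)]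
    integral_distr[OF random_variable_X[of 1] assms(2)] ident[OF assms(1)]
  by simp

lemma variance_compose_X:
  fixes g :: "real \<Rightarrow> real"
  assumes "k \<ge> 1" and [measurable]: "g \<in> borel_measurable borel"
  shows "variance (\<lambda>\<omega>. g (X k \<omega>)) = variance (\<lambda>\<omega>. g (X 1 \<omega>))"
  using expectation_compose_X[OF assms(1), of "\<lambda>x. (g x - expectation (\<lambda>\<omega>. g (X 1 \<omega>)))\<^sup>2"]
  by (simp add: expectation_compose_X[OF assms])

lemma prob_pred_X:
  assumes "k \<ge> 1" and "Measurable.pred borel P"
  shows "prob {\<omega>\<in>space M. P (X k \<omega>)} = prob {\<omega>\<in>space M. P (X 1 \<omega>)}"
proof -
  have "prob {\<omega>\<in>space M. P (X j \<omega>)} = measure (distr M borel (X j)) {x\<in>space borel. P x}"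
    if "j \<ge> 1" for j
    using measure_distr[OF random_variable_X[OF that] assms(2)[unfolded pred_def]]
    by (simp add: vimage_def Int_def conj_commute)
  then show ?thesis using ident[OF assms(1)] assms(1) by simp
qed

lemma measurable_sum_compose_X:
  fixes g :: "real \<Rightarrow> real"
  assumes "g \<in> borel_measurable borel"
  shows "(\<lambda>\<omega>. \<Sum>k\<in>{1..n}. g (X k \<omega>)) \<in> borel_measurable M"
  using random_variable_X by (intro borel_measurable_sum measurable_compose[OF _ assms]) auto

lemma sets_compose_X_gt:
  fixes g :: "real \<Rightarrow> real"
  assumes [measurable]: "g \<in> borel_measurable borel" and "k \<ge> 1"
  shows "{\<omega>\<in>space M. g (X k \<omega>) > T} \<in> events"
proof -
  have [measurable]: "random_variable borel (X k)" using assms(2) by (rule random_variable_X)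
  show ?thesis by measurable
qed

lemma sets_exists_X_gt:
  fixes g :: "real \<Rightarrow> real"
  assumes "g \<in> borel_measurable borel"
  shows "{\<omega>\<in>space M. \<exists>k\<in>{1..N}. g (X k \<omega>) > T} \<in> events"
proof -
  have "{\<omega>\<in>space M. \<exists>k\<in>{1..N}. g (X k \<omega>) > T} = (\<Union>k\<in>{1..N}. {\<omega>\<in>space M. g (X k \<omega>) > T})"
    by blast
  then show ?thesis using sets_compose_X_gt[OF assms] by auto
qed

lemma prob_exists_gt_le_moment:
  fixes g :: "real \<Rightarrow> real"
  assumes "g \<in> borel_measurable borel" and "b > 0" and "integrable M (\<lambda>\<omega>. g (X 1 \<omega>) powr b)" and "T > 0"
  shows "prob {\<omega>\<in>space M. \<exists>k\<in>{1..N}. g (X k \<omega>) > T}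
    \<le> real N * (expectation (\<lambda>\<omega>. g (X 1 \<omega>) powr b) / T powr b)"
proof -
  have "prob {\<omega>\<in>space M. \<exists>k\<in>{1..N}. g (X k \<omega>) > T} = prob (\<Union>k\<in>{1..N}. {\<omega>\<in>space M. g (X k \<omega>) > T})"
    by (rule arg_cong[where f=prob]) blast
  also have "\<dots> \<le> (\<Sum>k\<in>{1..N}. prob {\<omega>\<in>space M. g (X k \<omega>) > T})"
    using sets_compose_X_gt[OF assms(1)] by (intro finite_measure_subadditive_finite) auto
  also have "\<dots> = (\<Sum>k\<in>{1..N}. prob {\<omega>\<in>space M. g (X 1 \<omega>) > T})"
  proof (rule sum.cong)
    have pred: "Measurable.pred borel (\<lambda>x. g x > T)"
      unfolding pred_def by (rule borel_measurable_less[OF borel_measurable_const assms(1)])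
    show "prob {\<omega>\<in>space M. g (X k \<omega>) > T} = prob {\<omega>\<in>space M. g (X 1 \<omega>) > T}"
      if "k \<in> {1..N}" for k
      by (rule prob_pred_X[OF _ pred]) (use that in simp)
  qed simp
  also have "\<dots> = real N * prob {\<omega>\<in>space M. g (X 1 \<omega>) > T}"
    by simp
  also have "\<dots> \<le> real N * (expectation (\<lambda>\<omega>. g (X 1 \<omega>) powr b) / T powr b)"
    using measurable_compose[OF random_variable_X[of 1] assms(1)] assms(2-4)
    by (intro mult_left_mono prob_gt_le_moment) auto
  finally show ?thesis .
qed

lemma prob_truncated_sum_deviation:
  fixes g :: "real \<Rightarrow> real" and b T \<epsilon> :: real
  assumes [measurable]: "g \<in> borel_measurable borel" and nonneg: "\<And>x. g x \<ge> 0"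
    and b: "0 \<le> b" "b \<le> 2" and int_b: "integrable M (\<lambda>\<omega>. g (X 1 \<omega>) powr b)"
    and "T > 0" and "\<epsilon> > 0" and "N \<ge> 1"
  defines "V \<equiv> \<lambda>\<omega>. \<Sum>k\<in>{1..N}. min (g (X k \<omega>)) T"
  shows "prob {\<omega>\<in>space M. \<bar>V \<omega> - expectation V\<bar> \<ge> real N * \<epsilon>}
    \<le> T powr (2 - b) * expectation (\<lambda>\<omega>. g (X 1 \<omega>) powr b) / (real N * \<epsilon>\<^sup>2)"
proof -
  define h where "h x = min (g x) T" for x
  have h_meas[measurable]: "h \<in> borel_measurable borel" unfolding h_def by measurable
  have h: "\<bar>h x\<bar> \<le> T" for x
    using nonneg[of x] \<open>T > 0\<close> by (auto simp: h_def)
  have rv: "random_variable borel (\<lambda>\<omega>. h (X k \<omega>))" if "k \<ge> 1" for k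
    using measurable_compose[OF random_variable_X[OF that] h_meas] .
  have V: "V = (\<lambda>\<omega>. \<Sum>k\<in>{1..N}. h (X k \<omega>))" by (simp add: V_def h_def)
  have "\<bar>V \<omega>\<bar> \<le> N * T" for \<omega>
  proof -
    have "\<bar>V \<omega>\<bar> \<le> (\<Sum>k\<in>{1..N}. \<bar>h (X k \<omega>)\<bar>)" unfolding V by (rule sum_abs)
    also have "\<dots> \<le> (\<Sum>k\<in>{1..N}. T)" using h by (intro sum_mono) auto
    finally show ?thesis by simp
  qed
  then have "integrable M (\<lambda>\<omega>. (V \<omega>)\<^sup>2)"
    using rv \<open>T > 0\<close> unfolding V by (intro integrable_const_bound[where B="(N * T)\<^sup>2"])
      (auto simp: abs_le_square_iff[symmetric] abs_mult intro!: AE_I2)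
  then have "prob {\<omega>\<in>space M. \<bar>V \<omega> - expectation V\<bar> \<ge> real N * \<epsilon>} \<le> variance V / (real N * \<epsilon>)\<^sup>2"
    using rv \<open>\<epsilon> > 0\<close> \<open>N \<ge> 1\<close> unfolding V by (intro Chebyshev_inequality) auto
  also have "variance V = (\<Sum>k\<in>{1..N}. variance (\<lambda>\<omega>. h (X k \<omega>)))"
    unfolding V
  proof (rule variance_sum_indep[where T=T])
    show "indep_vars (\<lambda>_. borel) (\<lambda>k \<omega>. h (X k \<omega>)) {1..N}"
      by (rule indep_vars_compose_X[OF _ h_meas]) auto
  qed (use h in auto)
  also have "\<dots> = (\<Sum>k\<in>{1..N}. variance (\<lambda>\<omega>. h (X 1 \<omega>)))"
    by (intro sum.cong refl variance_compose_X[OF _ h_meas]) simp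
  also have "\<dots> = N * variance (\<lambda>\<omega>. h (X 1 \<omega>))"
    by simp
  also have "\<dots> / (real N * \<epsilon>)\<^sup>2 \<le> N * (T powr (2 - b) * expectation (\<lambda>\<omega>. g (X 1 \<omega>) powr b)) / (real N * \<epsilon>)\<^sup>2"
    using measurable_compose[OF random_variable_X[of 1] assms(1)] nonneg int_b b \<open>T > 0\<close>
    by (intro divide_right_mono mult_left_mono) (auto simp: h_def intro: variance_min_le_moment)
  finally show ?thesis
    using \<open>N \<ge> 1\<close> \<open>\<epsilon> > 0\<close> by (simp add: power2_eq_square field_simps)
qed
lemma expectation_sum_min_le:
  fixes g :: "real \<Rightarrow> real"
  assumes g: "g \<in> borel_measurable borel" and nonneg: "\<And>x. g x \<ge> 0"
    and int: "integrable M (\<lambda>\<omega>. g (X 1 \<omega>))" and "T \<ge> 0"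
  shows "expectation (\<lambda>\<omega>. \<Sum>k\<in>{1..N}. min (g (X k \<omega>)) T) \<le> real N * expectation (\<lambda>\<omega>. g (X 1 \<omega>))"
proof -
  define h where "h x = min (g x) T" for x
  have h_meas: "h \<in> borel_measurable borel" unfolding h_def using g by measurable
  have int_h: "integrable M (\<lambda>\<omega>. h (X k \<omega>))" if "k \<ge> 1" for k
    using measurable_compose[OF random_variable_X[OF that] h_meas] nonneg \<open>T \<ge> 0\<close>
    by (intro integrable_const_bound[where B=T]) (auto simp: h_def intro!: AE_I2)
  have "expectation (\<lambda>\<omega>. \<Sum>k\<in>{1..N}. h (X k \<omega>)) = (\<Sum>k\<in>{1..N}. expectation (\<lambda>\<omega>. h (X k \<omega>)))"
    using int_h by (intro Bochner_Integration.integral_sum) auto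
  also have "\<dots> = (\<Sum>k\<in>{1..N}. expectation (\<lambda>\<omega>. h (X 1 \<omega>)))"
    by (intro sum.cong refl expectation_compose_X[OF _ h_meas]) simp
  also have "\<dots> \<le> (\<Sum>k\<in>{1..N}. expectation (\<lambda>\<omega>. g (X 1 \<omega>)))"
    using int_h[of 1] int by (intro sum_mono integral_mono) (auto simp: h_def)
  finally show ?thesis by (simp add: h_def)
qed

lemma sum_gt_mean_subset:
  fixes g :: "real \<Rightarrow> real" and E \<epsilon> T :: real and N :: nat
  defines "V \<equiv> \<lambda>\<omega>. \<Sum>k\<in>{1..N}. min (g (X k \<omega>)) T"
  assumes "expectation V \<le> real N * E"
  shows "{\<omega>\<in>space M. (\<Sum>k\<in>{1..N}. g (X k \<omega>)) > real N * (E + \<epsilon>)}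
    \<subseteq> {\<omega>\<in>space M. \<exists>k\<in>{1..N}. g (X k \<omega>) > T} \<union> {\<omega>\<in>space M. \<bar>V \<omega> - expectation V\<bar> \<ge> real N * \<epsilon>}"
proof
  fix \<omega> assume \<omega>: "\<omega> \<in> {\<omega>\<in>space M. (\<Sum>k\<in>{1..N}. g (X k \<omega>)) > real N * (E + \<epsilon>)}"
  show "\<omega> \<in> {\<omega>\<in>space M. \<exists>k\<in>{1..N}. g (X k \<omega>) > T} \<union> {\<omega>\<in>space M. \<bar>V \<omega> - expectation V\<bar> \<ge> real N * \<epsilon>}"
  proof (cases "\<exists>k\<in>{1..N}. g (X k \<omega>) > T")
    case False
    then have "V \<omega> = (\<Sum>k\<in>{1..N}. g (X k \<omega>))"
      unfolding V_def by (intro sum.cong) (auto simp: not_less)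
    with \<omega> have "real N * \<epsilon> \<le> \<bar>V \<omega> - expectation V\<bar>"
      using assms(2) by (simp add: algebra_simps abs_if)
    then show ?thesis using \<omega> by simp
  qed (use \<omega> in auto)
qed

lemma prob_sum_gt_mean_le:
  fixes g :: "real \<Rightarrow> real" and b \<epsilon> :: real
  assumes [measurable]: "g \<in> borel_measurable borel" and nonneg: "\<And>x. g x \<ge> 0"
    and b: "0 < b" "b \<le> 2" and int_b: "integrable M (\<lambda>\<omega>. g (X 1 \<omega>) powr b)"
    and int: "integrable M (\<lambda>\<omega>. g (X 1 \<omega>))" and "\<epsilon> > 0" and "N \<ge> 1"
  shows "prob {\<omega>\<in>space M. (\<Sum>k\<in>{1..N}. g (X k \<omega>)) > real N * (expectation (\<lambda>\<omega>. g (X 1 \<omega>)) + \<epsilon>)}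
    \<le> expectation (\<lambda>\<omega>. g (X 1 \<omega>) powr b) * (1 + 1 / \<epsilon>\<^sup>2) * real N powr (1 - b)"
proof -
  let ?E = "expectation (\<lambda>\<omega>. g (X 1 \<omega>))" and ?C = "expectation (\<lambda>\<omega>. g (X 1 \<omega>) powr b)"
  define h where "h x = min (g x) (real N)" for x
  define V where "V \<omega> = (\<Sum>k\<in>{1..N}. h (X k \<omega>))" for \<omega>
  have h_meas[measurable]: "h \<in> borel_measurable borel" unfolding h_def by measurable
  have EV: "expectation V \<le> real N * ?E"
    unfolding V_def h_def using expectation_sum_min_le[OF assms(1) nonneg int] by simp
  have "{\<omega>\<in>space M. (\<Sum>k\<in>{1..N}. g (X k \<omega>)) > real N * (?E + \<epsilon>)}
      \<subseteq> {\<omega>\<in>space M. \<exists>k\<in>{1..N}. g (X k \<omega>) > real N} \<union> {\<omega>\<in>space M. \<bar>V \<omega> - expectation V\<bar> \<ge> real N * \<epsilon>}"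
    using sum_gt_mean_subset[where T="real N", OF EV[unfolded V_def[abs_def] h_def]]
    by (simp add: V_def[abs_def] h_def)
  moreover have "V \<in> borel_measurable M"
    unfolding V_def using measurable_sum_compose_X[OF h_meas] .
  then have V_sets: "{\<omega>\<in>space M. \<bar>V \<omega> - expectation V\<bar> \<ge> real N * \<epsilon>} \<in> events"
    by measurable
  ultimately have "prob {\<omega>\<in>space M. (\<Sum>k\<in>{1..N}. g (X k \<omega>)) > real N * (?E + \<epsilon>)}
      \<le> prob {\<omega>\<in>space M. \<exists>k\<in>{1..N}. g (X k \<omega>) > real N} + prob {\<omega>\<in>space M. \<bar>V \<omega> - expectation V\<bar> \<ge> real N * \<epsilon>}"
    using sets_exists_X_gt[OF assms(1)] V_sets
    by (intro order_trans[OF finite_measure_mono measure_Un_le] sets.Un) auto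
  also have "\<dots> \<le> real N * (?C / real N powr b) + real N powr (2 - b) * ?C / (real N * \<epsilon>\<^sup>2)"
  proof (rule add_mono)
    show "prob {\<omega>\<in>space M. \<exists>k\<in>{1..N}. g (X k \<omega>) > real N} \<le> real N * (?C / real N powr b)"
      using \<open>N \<ge> 1\<close> b by (intro prob_exists_gt_le_moment[OF assms(1) _ int_b]) auto
    show "prob {\<omega>\<in>space M. \<bar>V \<omega> - expectation V\<bar> \<ge> real N * \<epsilon>}
        \<le> real N powr (2 - b) * ?C / (real N * \<epsilon>\<^sup>2)"
      unfolding V_def h_def using \<open>N \<ge> 1\<close> \<open>\<epsilon> > 0\<close> b
      by (intro prob_truncated_sum_deviation[OF assms(1) nonneg _ _ int_b]) auto
  qed
  also have "\<dots> = ?C * (1 + 1 / \<epsilon>\<^sup>2) * real N powr (1 - b)"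
  proof -
    have "real N * (?C / real N powr b) = ?C * real N powr (1 - b)"
      using \<open>N \<ge> 1\<close> by (simp add: powr_diff)
    moreover have "real N powr (2 - b) = real N * real N powr (1 - b)"
      using \<open>N \<ge> 1\<close> powr_add[of "real N" 1 "1 - b"] by simp
    ultimately show ?thesis using \<open>N \<ge> 1\<close> \<open>\<epsilon> > 0\<close> by (simp add: field_simps)
  qed
  finally show ?thesis .
qed

lemma AE_eventually_sum_le_twice_mean:
  fixes g :: "real \<Rightarrow> real" and b \<epsilon> :: real
  assumes g: "g \<in> borel_measurable borel" and nonneg: "\<And>x. g x \<ge> 0"
    and b: "1 < b" "b \<le> 2" and int_b: "integrable M (\<lambda>\<omega>. g (X 1 \<omega>) powr b)"
    and int: "integrable M (\<lambda>\<omega>. g (X 1 \<omega>))" and "\<epsilon> > 0"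
  shows "AE \<omega> in M. \<forall>\<^sub>F n in sequentially.
    (\<Sum>k\<in>{1..n}. g (X k \<omega>)) \<le> 2 * real n * (expectation (\<lambda>\<omega>. g (X 1 \<omega>)) + \<epsilon>)"
proof -
  let ?E = "expectation (\<lambda>\<omega>. g (X 1 \<omega>))"
  let ?K = "expectation (\<lambda>\<omega>. g (X 1 \<omega>) powr b) * (1 + 1 / \<epsilon>\<^sup>2)"
  define A where "A j = {\<omega>\<in>space M. (\<Sum>k\<in>{1..2^j}. g (X k \<omega>)) > real (2 ^ j) * (?E + \<epsilon>)}" for j
  have A: "A j \<in> events" for j
  proof -
    have [measurable]: "(\<lambda>\<omega>. \<Sum>k\<in>{1..2^j}. g (X k \<omega>)) \<in> borel_measurable M"
      using measurable_sum_compose_X[OF g] .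
    show ?thesis unfolding A_def by measurable
  qed
  have bound: "measure M (A j) \<le> ?K * (2 powr (1 - b)) ^ j" for j
  proof -
    have "real (2 ^ j) powr (1 - b) = (2 powr (1 - b)) ^ j"
      by (simp add: powr_realpow[symmetric] powr_powr mult.commute)
    then show ?thesis
      using prob_sum_gt_mean_le[OF g nonneg _ b(2) int_b int \<open>\<epsilon> > 0\<close>, of "2 ^ j"] b(1)
      by (simp add: A_def)
  qed
  have "summable (\<lambda>j. ?K * (2 powr (1 - b)) ^ j)"
    using b by (intro summable_mult summable_geometric) (simp add: powr_less_one)
  then have "summable (\<lambda>j. measure M (A j))"
    by (rule summable_comparison_test'[where N=0]) (use bound in simp)
  then have "AE \<omega> in M. \<forall>\<^sub>F j in sequentially. \<omega> \<in> space M - A j"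
    using A by (intro borel_cantelli_AE1) (auto simp: emeasure_eq_measure)
  then show ?thesis
  proof eventually_elim
    case (elim \<omega>)
    then obtain J where "\<And>j. j \<ge> J \<Longrightarrow> \<omega> \<notin> A j" and "\<omega> \<in> space M"
      unfolding eventually_sequentially by auto
    then have "(\<Sum>k\<in>{1..2^j}. g (X k \<omega>)) \<le> real (2 ^ j) * (?E + \<epsilon>)" if "j \<ge> J" for j
      using that by (auto simp: A_def not_less)
    moreover have "?E + \<epsilon> \<ge> 0"
      using nonneg \<open>\<epsilon> > 0\<close> by (simp add: add_nonneg_nonneg integral_nonneg_AE)
    ultimately have "\<forall>n\<ge>2 ^ J. (\<Sum>k\<in>{1..n}. g (X k \<omega>)) \<le> 2 * real n * (?E + \<epsilon>)"
      using nonneg by (blast intro: sum_le_twice_if_dyadic_sums_le)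
    then show ?case unfolding eventually_sequentially by blast
  qed
qed

lemma prob_mean_ge_le_Hoeffding:
  fixes g :: "real \<Rightarrow> real"
  assumes g: "g \<in> borel_measurable borel" and range: "\<And>x. g x \<in> {a..b}" and "a < b"
    and "\<epsilon> \<ge> 0" and "n \<ge> 1"
  shows "prob {\<omega>\<in>space M. (\<Sum>k\<in>{1..n}. g (X k \<omega>)) / real n \<ge> expectation (\<lambda>\<omega>. g (X 1 \<omega>)) + \<epsilon>}
     \<le> exp (- 2 * real n * \<epsilon>\<^sup>2 / (b - a)\<^sup>2)"
proof -
  interpret Hoeffding_ineq_iid M "{1..n}" "\<lambda>k \<omega>. g (X k \<omega>)" "\<lambda>\<omega>. g (X 1 \<omega>)" a b
    "expectation (\<lambda>\<omega>. g (X 1 \<omega>))"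
  proof unfold_locales
    show "indep_vars (\<lambda>_. borel) (\<lambda>k \<omega>. g (X k \<omega>)) {1..n}"
      by (rule indep_vars_compose_X[OF _ g]) auto
    show "distr M borel (\<lambda>\<omega>. g (X i \<omega>)) = distr M borel (\<lambda>\<omega>. g (X 1 \<omega>))" if "i \<in> {1..n}" for i
      using that by (intro distr_compose_X[OF _ g]) simp
    show "random_variable borel (\<lambda>\<omega>. g (X 1 \<omega>))"
      using measurable_compose[OF random_variable_X[of 1] g] by simp
    show "AE \<omega> in M. g (X 1 \<omega>) \<in> {a..b}"
      using range by simp
  qed simp
  have "{1..n} \<noteq> {}" using \<open>n \<ge> 1\<close> by simp
  from Hoeffding_ineq_ge'[OF \<open>\<epsilon> \<ge> 0\<close> \<open>a < b\<close> this] show ?thesis by simp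
qed

lemma AE_eventually_sum_lt_mean:
  fixes g :: "real \<Rightarrow> real"
  assumes g: "g \<in> borel_measurable borel" and range: "\<And>x. g x \<in> {a..b}" and "a < b" and "\<epsilon> > 0"
  shows "AE \<omega> in M. \<forall>\<^sub>F n in sequentially.
    (\<Sum>k\<in>{1..n}. g (X k \<omega>)) < real n * (expectation (\<lambda>\<omega>. g (X 1 \<omega>)) + \<epsilon>)"
proof -
  let ?E = "expectation (\<lambda>\<omega>. g (X 1 \<omega>))"
  define A where "A n = {\<omega>\<in>space M. (\<Sum>k\<in>{1..n}. g (X k \<omega>)) / real n \<ge> ?E + \<epsilon>}" for n
  have A: "A n \<in> events" for n
  proof -
    have [measurable]: "(\<lambda>\<omega>. \<Sum>k\<in>{1..n}. g (X k \<omega>)) \<in> borel_measurable M"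
      using measurable_sum_compose_X[OF g] .
    show ?thesis unfolding A_def by measurable
  qed
  define r where "r = exp (- 2 * \<epsilon>\<^sup>2 / (b - a)\<^sup>2)"
  have r: "0 < r" "r < 1" using \<open>\<epsilon> > 0\<close> \<open>a < b\<close> by (auto simp: r_def)
  have bound: "measure M (A n) \<le> r ^ n" if "n \<ge> 1" for n
    using prob_mean_ge_le_Hoeffding[OF g range \<open>a < b\<close> _ that, of \<epsilon>] \<open>\<epsilon> > 0\<close>
    by (simp add: A_def r_def exp_of_nat_mult[symmetric] algebra_simps)
  have "summable (\<lambda>n. r ^ n)" using r by simp
  then have "summable (\<lambda>n. measure M (A n))"
    by (rule summable_comparison_test'[where N=1]) (use bound in simp)
  then have "AE \<omega> in M. \<forall>\<^sub>F n in sequentially. \<omega> \<in> space M - A n"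
    using A by (intro borel_cantelli_AE1) (auto simp: emeasure_eq_measure)
  then show ?thesis
  proof eventually_elim
    case (elim \<omega>)
    then have "\<forall>\<^sub>F n in sequentially. \<omega> \<notin> A n \<and> n \<ge> 1"
      by (simp add: eventually_conj_iff eventually_ge_at_top)
    then show ?case
      by eventually_elim (use elim in \<open>auto simp: A_def not_le field_simps\<close>)
  qed
qed

lemma exists_truncation_level:
  assumes "integrable M (X 1)" and "expectation (X 1) = 0" and "\<delta> > 0"
  shows "\<exists>c>0. expectation (\<lambda>\<omega>. truncate c (X 1 \<omega>)) < \<delta> \<and> expectation (\<lambda>\<omega>. excess c (X 1 \<omega>)) < \<delta>"
proof -
  have X1: "random_variable borel (X 1)" by (simp add: random_variable_X)
  have "(\<lambda>n. expectation (\<lambda>\<omega>. truncate (real n) (X 1 \<omega>))) \<longlonglongrightarrow> expectation (X 1)"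
  proof (rule integral_dominated_convergence[where w="\<lambda>\<omega>. \<bar>X 1 \<omega>\<bar>"])
    show "AE \<omega> in M. (\<lambda>n. truncate (real n) (X 1 \<omega>)) \<longlonglongrightarrow> X 1 \<omega>"
      by (intro AE_I2 tendsto_eventually eventually_mono[OF eventually_truncate_eq]) auto
  next
    show "(\<lambda>\<omega>. truncate (real n) (X 1 \<omega>)) \<in> borel_measurable M" for n
      using measurable_compose[OF X1 measurable_truncate] by simp
    show "AE \<omega> in M. norm (truncate (real n) (X 1 \<omega>)) \<le> \<bar>X 1 \<omega>\<bar>" for n
      by (intro AE_I2) (simp add: abs_truncate_le)
  qed (use assms(1) X1 in simp_all)
  then have "\<forall>\<^sub>F n in sequentially. expectation (\<lambda>\<omega>. truncate (real n) (X 1 \<omega>)) < \<delta>"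
    using assms(2,3) by (auto dest: order_tendstoD(2))
  moreover have "(\<lambda>n. expectation (\<lambda>\<omega>. excess (real n) (X 1 \<omega>))) \<longlonglongrightarrow> expectation (\<lambda>\<omega>. 0)"
  proof (rule integral_dominated_convergence[where w="\<lambda>\<omega>. \<bar>X 1 \<omega>\<bar>"])
    show "AE \<omega> in M. (\<lambda>n. excess (real n) (X 1 \<omega>)) \<longlonglongrightarrow> 0"
      by (intro AE_I2 tendsto_eventually eventually_mono[OF eventually_truncate_eq]) auto
  next
    show "(\<lambda>\<omega>. excess (real n) (X 1 \<omega>)) \<in> borel_measurable M" for n
      using measurable_compose[OF X1 measurable_excess] by simp
    show "AE \<omega> in M. norm (excess (real n) (X 1 \<omega>)) \<le> \<bar>X 1 \<omega>\<bar>" for n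
      by (intro AE_I2) (simp add: excess_nonneg excess_le_abs)
  qed (use assms(1) X1 in simp_all)
  then have "\<forall>\<^sub>F n in sequentially. expectation (\<lambda>\<omega>. excess (real n) (X 1 \<omega>)) < \<delta>"
    using assms(3) by (auto dest: order_tendstoD(2))
  ultimately have "\<forall>\<^sub>F n in sequentially. expectation (\<lambda>\<omega>. truncate (real n) (X 1 \<omega>)) < \<delta>
      \<and> expectation (\<lambda>\<omega>. excess (real n) (X 1 \<omega>)) < \<delta> \<and> n > 0"
    by (intro eventually_conj eventually_gt_at_top)
  then obtain n where "expectation (\<lambda>\<omega>. truncate (real n) (X 1 \<omega>)) < \<delta>"
    "expectation (\<lambda>\<omega>. excess (real n) (X 1 \<omega>)) < \<delta>" "n > 0"
    unfolding eventually_sequentially by blast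
  then show ?thesis by (intro exI[of _ "real n"]) simp
qed

theorem AE_eventually_sum_le:
  fixes \<beta> \<epsilon> :: real
  assumes int: "integrable M (X 1)" and mean: "expectation (X 1) = 0"
    and "\<beta> > 1" and int_\<beta>: "integrable M (\<lambda>\<omega>. \<bar>X 1 \<omega>\<bar> powr \<beta>)" and "\<epsilon> > 0"
  shows "AE \<omega> in M. \<forall>\<^sub>F n in sequentially. (\<Sum>k\<in>{1..n}. X k \<omega>) \<le> \<epsilon> * real n"
proof -
  obtain c where c: "c > 0" "expectation (\<lambda>\<omega>. truncate c (X 1 \<omega>)) < \<epsilon> / 8"
    "expectation (\<lambda>\<omega>. excess c (X 1 \<omega>)) < \<epsilon> / 8"
    using exists_truncation_level[OF int mean, of "\<epsilon> / 8"] \<open>\<epsilon> > 0\<close> by auto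
  define b where "b = min \<beta> 2"
  have b: "1 < b" "b \<le> 2" "b \<le> \<beta>" using \<open>\<beta> > 1\<close> by (auto simp: b_def)
  have X1: "random_variable borel (X 1)" by (simp add: random_variable_X)
  have int_excess: "integrable M (\<lambda>\<omega>. excess c (X 1 \<omega>))"
    using measurable_compose[OF X1 measurable_excess] c(1)
    by (intro Bochner_Integration.integrable_bound[OF int]) (auto intro!: AE_I2 simp: excess_nonneg excess_le_abs)
  have int_excess_b: "integrable M (\<lambda>\<omega>. excess c (X 1 \<omega>) powr b)"
    by (rule integrable_excess_powr[OF X1 int_\<beta>]) (use b c(1) in auto)
  have "AE \<omega> in M. \<forall>\<^sub>F n in sequentially.
      (\<Sum>k\<in>{1..n}. truncate c (X k \<omega>)) < real n * (expectation (\<lambda>\<omega>. truncate c (X 1 \<omega>)) + \<epsilon> / 8)"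
    using c(1) \<open>\<epsilon> > 0\<close> truncate_range by (intro AE_eventually_sum_lt_mean[of _ "- c" c]) auto
  moreover have "AE \<omega> in M. \<forall>\<^sub>F n in sequentially.
      (\<Sum>k\<in>{1..n}. excess c (X k \<omega>)) \<le> 2 * real n * (expectation (\<lambda>\<omega>. excess c (X 1 \<omega>)) + \<epsilon> / 8)"
    using b \<open>\<epsilon> > 0\<close> int_excess int_excess_b
    by (intro AE_eventually_sum_le_twice_mean) (auto simp: excess_nonneg)
  ultimately show ?thesis
  proof eventually_elim
    case (elim \<omega>)
    then show ?case
    proof eventually_elim
      case (elim n)
      have "(\<Sum>k\<in>{1..n}. X k \<omega>) \<le> (\<Sum>k\<in>{1..n}. truncate c (X k \<omega>)) + (\<Sum>k\<in>{1..n}. excess c (X k \<omega>))"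
        using c(1) by (simp add: le_truncate_plus_excess sum_mono flip: sum.distrib)
      moreover have "real n * (expectation (\<lambda>\<omega>. truncate c (X 1 \<omega>)) + \<epsilon> / 8) \<le> real n * (\<epsilon> / 4)"
        using c(2) by (intro mult_left_mono) auto
      moreover have "2 * real n * (expectation (\<lambda>\<omega>. excess c (X 1 \<omega>)) + \<epsilon> / 8) \<le> 2 * real n * (\<epsilon> / 4)"
        using c(3) by (intro mult_left_mono) auto
      moreover have "real n * (\<epsilon> / 4) + 2 * real n * (\<epsilon> / 4) \<le> \<epsilon> * real n"
        using \<open>\<epsilon> > 0\<close> by (simp add: algebra_simps)
      ultimately show ?case using elim by linarith
    qed
  qed
qed

end

section \<open>The random walk with drift\<close>

locale iid_walk = iid_sequence +
  fixes \<mu> :: real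
begin

lemma measurable_Sdrift[measurable]: "(\<lambda>\<omega>. Sdrift X \<mu> n \<omega>) \<in> borel_measurable M"
  unfolding Sdrift_def
  by (intro borel_measurable_diff borel_measurable_sum random_variable_X borel_measurable_const) auto

lemma Sdrift_0[simp]: "Sdrift X \<mu> 0 \<omega> = 0"
  by (simp add: Sdrift_def)

lemma Sdrift_add_diff:
  "Sdrift X \<mu> (e + k) \<omega> - Sdrift X \<mu> e \<omega> = (\<Sum>i\<in>{1..k}. X (e + i) \<omega>) - real k * \<mu>"
  by (induction k) (simp_all add: Sdrift_def algebra_simps)

abbreviation walk :: "'a \<Rightarrow> nat \<Rightarrow> real" where
  "walk \<omega> \<equiv> \<lambda>k. Sdrift X \<mu> k \<omega>"

lemma AE_walk_unbounded_below_bdd_above: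
  fixes \<beta> :: real
  assumes "integrable M (X 1)" and "expectation (X 1) = 0"
    and "\<beta> > 1" and "integrable M (\<lambda>\<omega>. \<bar>X 1 \<omega>\<bar> powr \<beta>)" and "\<mu> > 0"
  shows "AE \<omega> in M. (\<forall>y a. \<exists>n\<ge>a. walk \<omega> n < y) \<and> bdd_above (range (walk \<omega>))"
proof -
  have "AE \<omega> in M. \<forall>\<^sub>F n in sequentially. walk \<omega> n \<le> - (\<mu> / 2) * real n"
    using AE_eventually_sum_le[OF assms(1-4), of "\<mu> / 2"] \<open>\<mu> > 0\<close>
    by (auto simp: Sdrift_def algebra_simps elim!: AE_mp[OF _ AE_I2[OF impI]] eventually_mono)
  then show ?thesis
  proof eventually_elim
    case (elim \<omega>)
    show ?case
      using frequently_less_if_eventually_le_neg_linear[of "\<mu> / 2", OF _ elim]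
        bdd_above_if_eventually_le_neg_linear[of "\<mu> / 2", OF _ elim] \<open>\<mu> > 0\<close>
      by simp
  qed
qed

definition steps_upto :: "nat \<Rightarrow> 'a \<Rightarrow> nat \<Rightarrow> real" where
  "steps_upto e \<omega> = (\<lambda>i\<in>{1..e}. X i \<omega>)"

definition steps_after :: "nat \<Rightarrow> nat \<Rightarrow> 'a \<Rightarrow> nat \<Rightarrow> real" where
  "steps_after e H \<omega> = (\<lambda>i\<in>{1..H}. X (e + i) \<omega>)"

lemma measurable_steps_upto[measurable]: "steps_upto e \<in> measurable M (\<Pi>\<^sub>M i\<in>{1..e}. borel)"
  unfolding steps_upto_def by (rule measurable_restrict) (simp add: random_variable_X)

lemma measurable_steps_after[measurable]: "steps_after e H \<in> measurable M (\<Pi>\<^sub>M i\<in>{1..H}. borel)"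
  unfolding steps_after_def by (rule measurable_restrict) (simp add: random_variable_X)

lemma indep_steps_upto_after:
  "indep_var (\<Pi>\<^sub>M i\<in>{1..e}. borel) (steps_upto e) (\<Pi>\<^sub>M i\<in>{1..H}. borel) (steps_after e H)"
proof -
  let ?shift = "\<lambda>z. \<lambda>i\<in>{1..H}. z (e + i)"
  have "indep_var (\<Pi>\<^sub>M i\<in>{1..e}. borel) (steps_upto e)
      (\<Pi>\<^sub>M i\<in>{e+1..e+H}. borel) (\<lambda>\<omega>. \<lambda>i\<in>{e+1..e+H}. X i \<omega>)"
    unfolding steps_upto_def by (rule indep_var_restrict[OF indep]) auto
  moreover have "id \<in> measurable (\<Pi>\<^sub>M i\<in>{1..e}. borel) (\<Pi>\<^sub>M i\<in>{1..e}. borel)"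
    by simp
  moreover have "?shift \<in> measurable (\<Pi>\<^sub>M i\<in>{e+1..e+H}. borel) (\<Pi>\<^sub>M i\<in>{1..H}. borel)"
    by (rule measurable_restrict) simp
  ultimately have "indep_var (\<Pi>\<^sub>M i\<in>{1..e}. borel) (id \<circ> steps_upto e)
      (\<Pi>\<^sub>M i\<in>{1..H}. borel) (?shift \<circ> (\<lambda>\<omega>. \<lambda>i\<in>{e+1..e+H}. X i \<omega>))"
    by (rule indep_var_compose)
  moreover have "?shift \<circ> (\<lambda>\<omega>. \<lambda>i\<in>{e+1..e+H}. X i \<omega>) = steps_after e H"
    by (auto simp: steps_after_def fun_eq_iff)
  ultimately show ?thesis by simp
qed

lemma distr_steps_after:
  assumes "H \<ge> 1"
  shows "distr M (\<Pi>\<^sub>M i\<in>{1..H}. borel) (steps_after e H) = (\<Pi>\<^sub>M i\<in>{1..H}. distr M borel (X 1))"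
proof -
  have "indep_vars (\<lambda>_. borel) (\<lambda>i. X (e + i)) {1..H}"
    by (rule indep_vars_reindex[OF indep_vars_subset[OF indep]]) auto
  then have "distr M (\<Pi>\<^sub>M i\<in>{1..H}. borel) (steps_after e H) = (\<Pi>\<^sub>M i\<in>{1..H}. distr M borel (X (e + i)))"
    unfolding steps_after_def using assms
    by (subst (asm) indep_vars_iff_distr_eq_PiM') (auto simp: random_variable_X)
  also have "\<dots> = (\<Pi>\<^sub>M i\<in>{1..H}. distr M borel (X 1))"
    by (intro PiM_cong refl ident) auto
  finally show ?thesis .
qed

lemma prob_steps_after_shift:
  assumes "H \<ge> 1" and "B \<in> sets (\<Pi>\<^sub>M i\<in>{1..H}. borel)"
  shows "prob (steps_after e H -` B \<inter> space M) = prob (steps_after 0 H -` B \<inter> space M)"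
proof -
  have "prob (steps_after e' H -` B \<inter> space M) = measure (\<Pi>\<^sub>M i\<in>{1..H}. distr M borel (X 1)) B" for e'
    unfolding distr_steps_after[OF assms(1), of e', symmetric]
    by (rule measure_distr[OF measurable_steps_after assms(2), symmetric])
  then show ?thesis by simp
qed

definition rise :: "nat \<Rightarrow> real \<Rightarrow> 'a set" where
  "rise e t = {\<omega>\<in>space M. \<exists>k. Sdrift X \<mu> (e + k) \<omega> - Sdrift X \<mu> e \<omega> > t}"

lemma sets_rise[measurable]: "rise e t \<in> events"
  unfolding rise_def by measurable

definition rise_vectors :: "real \<Rightarrow> nat \<Rightarrow> (nat \<Rightarrow> real) set" where
  "rise_vectors t H = {z \<in> space (\<Pi>\<^sub>M i\<in>{1..H}. borel). \<exists>k\<in>{1..H}. (\<Sum>i\<in>{1..k}. z i) - real k * \<mu> > t}"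

lemma sets_rise_vectors: "rise_vectors t H \<in> sets (\<Pi>\<^sub>M i\<in>{1..H}. borel)"
proof -
  have "(\<lambda>z. (\<Sum>i\<in>{1..k}. z i) - real k * \<mu>) \<in> borel_measurable (\<Pi>\<^sub>M i\<in>{1..H}. borel)"
    if "k \<in> {1..H}" for k
    using that by (intro borel_measurable_diff borel_measurable_sum borel_measurable_const) auto
  then show ?thesis unfolding rise_vectors_def by measurable
qed

lemma steps_after_vimage_rise_vectors:
  "steps_after e H -` rise_vectors t H \<inter> space M
     = {\<omega>\<in>space M. \<exists>k\<in>{1..H}. Sdrift X \<mu> (e + k) \<omega> - Sdrift X \<mu> e \<omega> > t}"
proof -
  have "(\<Sum>i\<in>{1..k}. steps_after e H \<omega> i) = (\<Sum>i\<in>{1..k}. X (e + i) \<omega>)" if "k \<in> {1..H}" for k \<omega>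
    using that by (intro sum.cong) (auto simp: steps_after_def)
  then show ?thesis
    using measurable_space[OF measurable_steps_after] by (auto simp: rise_vectors_def Sdrift_add_diff)
qed

lemma rise_eq_UN_steps_after:
  assumes "t \<ge> 0"
  shows "rise e t = (\<Union>H. steps_after e (Suc H) -` rise_vectors t (Suc H) \<inter> space M)"
proof -
  have "Sdrift X \<mu> (e + k) \<omega> - Sdrift X \<mu> e \<omega> > t \<Longrightarrow> k \<in> {1..Suc (k - 1)}" for k \<omega>
    using assms by (cases k) auto
  then show ?thesis unfolding steps_after_vimage_rise_vectors rise_def by fast
qed

text \<open>Markov property at a fixed time e. A rise within H steps after e depends only on
  X_{e+1}, ..., X_{e+H}; the general case follows by letting H tend to infinity.\<close>

lemma prob_steps_upto_Int_rise:
  assumes A: "A \<in> sets (\<Pi>\<^sub>M i\<in>{1..e}. borel)" and "t \<ge> 0"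
  shows "prob (steps_upto e -` A \<inter> space M \<inter> rise e t) = prob (steps_upto e -` A \<inter> space M) * prob (rise 0 t)"
proof -
  define C where "C = steps_upto e -` A \<inter> space M"
  define R where "R e' H = steps_after e' (Suc H) -` rise_vectors t (Suc H) \<inter> space M" for e' H
  have C: "C \<in> events" unfolding C_def using A by measurable
  have R: "R e' H \<in> events" for e' H
    unfolding R_def using sets_rise_vectors by measurable
  have mono: "R e' H \<subseteq> R e' H'" if "H \<le> H'" for e' H H'
    using that unfolding R_def steps_after_vimage_rise_vectors by force
  have "(\<lambda>H. prob (C \<inter> R e H)) \<longlonglongrightarrow> prob (\<Union>H. C \<inter> R e H)"
    using C R mono by (intro finite_Lim_measure_incseq) (auto simp: incseq_def, blast)
  moreover have "(\<lambda>H. prob (R 0 H)) \<longlonglongrightarrow> prob (\<Union>H. R 0 H)"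
    using R mono by (intro finite_Lim_measure_incseq) (auto simp: incseq_def)
  moreover have "(\<Union>H. C \<inter> R e H) = C \<inter> rise e t" "(\<Union>H. R 0 H) = rise 0 t"
    using rise_eq_UN_steps_after[OF \<open>t \<ge> 0\<close>] by (auto simp: R_def)
  moreover have "prob (C \<inter> R e H) = prob C * prob (R 0 H)" for H
  proof -
    have "(\<lambda>\<omega>. (steps_upto e \<omega>, steps_after e (Suc H) \<omega>)) -` (A \<times> rise_vectors t (Suc H)) \<inter> space M = C \<inter> R e H"
      by (auto simp: C_def R_def)
    then have "prob (C \<inter> R e H) = prob C * prob (R e H)"
      using indep_varD[OF indep_steps_upto_after A sets_rise_vectors, of "Suc H" t]
      by (simp only: C_def R_def)
    also have "prob (R e H) = prob (R 0 H)"
      unfolding R_def by (rule prob_steps_after_shift[OF _ sets_rise_vectors]) simp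
    finally show ?thesis .
  qed
  ultimately have "(\<lambda>H. prob C * prob (R 0 H)) \<longlonglongrightarrow> prob (C \<inter> rise e t)"
    and "(\<lambda>H. prob C * prob (R 0 H)) \<longlonglongrightarrow> prob C * prob (rise 0 t)"
    by (auto intro: tendsto_mult_left)
  then show ?thesis unfolding C_def by (rule LIMSEQ_unique)
qed

lemma prob_steps_upto_Int_no_rise:
  assumes "A \<in> sets (\<Pi>\<^sub>M i\<in>{1..e}. borel)" and "t \<ge> 0"
  shows "prob (steps_upto e -` A \<inter> space M - rise e t) = prob (steps_upto e -` A \<inter> space M) * (1 - prob (rise 0 t))"
  using prob_steps_upto_Int_rise[OF assms] finite_measure_Diff'[of "steps_upto e -` A \<inter> space M" "rise e t"] assms(1)
  by (simp add: right_diff_distrib)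

lemma prob_no_rise_step:
  assumes "t \<ge> 0" and "\<mu> \<ge> 0"
  shows "prob {\<omega>\<in>space M. X 1 \<omega> \<le> 0} * prob (space M - rise 0 (t + \<mu>)) \<le> prob (space M - rise 0 t)"
proof -
  define A where "A = {y \<in> space (\<Pi>\<^sub>M i\<in>{1..1::nat}. borel). y 1 \<le> (0::real)}"
  have A: "A \<in> sets (\<Pi>\<^sub>M i\<in>{1..1}. borel)"
    unfolding A_def by measurable
  have A_event: "steps_upto 1 -` A \<inter> space M = {\<omega>\<in>space M. X 1 \<omega> \<le> 0}"
    using measurable_space[OF measurable_steps_upto[of 1]] by (auto simp: A_def steps_upto_def)
  have "prob (steps_upto 1 -` A \<inter> space M - rise 1 (t + \<mu>))
      = prob (steps_upto 1 -` A \<inter> space M) * (1 - prob (rise 0 (t + \<mu>)))"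
    using assms by (intro prob_steps_upto_Int_no_rise[OF A]) simp
  then have "prob {\<omega>\<in>space M. X 1 \<omega> \<le> 0} * prob (space M - rise 0 (t + \<mu>))
      = prob ({\<omega>\<in>space M. X 1 \<omega> \<le> 0} - rise 1 (t + \<mu>))"
    unfolding A_event prob_compl[OF sets_rise] by simp
  also have "\<dots> \<le> prob (space M - rise 0 t)"
  proof (rule finite_measure_mono)
    show "{\<omega>\<in>space M. X 1 \<omega> \<le> 0} - rise 1 (t + \<mu>) \<subseteq> space M - rise 0 t"
    proof
      fix \<omega> assume \<omega>: "\<omega> \<in> {\<omega>\<in>space M. X 1 \<omega> \<le> 0} - rise 1 (t + \<mu>)"
      then have "Sdrift X \<mu> 1 \<omega> \<le> - \<mu>" by (simp add: Sdrift_def)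
      moreover have "Sdrift X \<mu> (1 + k) \<omega> - Sdrift X \<mu> 1 \<omega> \<le> t + \<mu>" for k
        using \<omega> by (auto simp: rise_def not_less)
      ultimately have "Sdrift X \<mu> (1 + k) \<omega> \<le> t" for k
        by (smt (verit))
      then have "Sdrift X \<mu> k \<omega> \<le> t" for k
        using \<open>t \<ge> 0\<close> by (cases k) auto
      then show "\<omega> \<in> space M - rise 0 t" using \<omega> by (auto simp: rise_def not_less)
    qed
  qed simp
  finally show ?thesis .
qed

lemma prob_no_rise_mono:
  assumes "t \<le> t'"
  shows "prob (space M - rise 0 t) \<le> prob (space M - rise 0 t')"
proof (rule finite_measure_mono)
  have "rise 0 t' \<subseteq> rise 0 t"
    using assms unfolding rise_def by (auto intro: order.strict_trans1)
  then show "space M - rise 0 t \<subseteq> space M - rise 0 t'" by blast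
qed simp

lemma prob_no_rise_power:
  assumes "t \<ge> 0" and "\<mu> \<ge> 0"
  shows "prob {\<omega>\<in>space M. X 1 \<omega> \<le> 0} ^ n * prob (space M - rise 0 (t + real n * \<mu>))
    \<le> prob (space M - rise 0 t)"
proof (induction n)
  case (Suc n)
  let ?r = "prob {\<omega>\<in>space M. X 1 \<omega> \<le> 0}"
  have "?r * prob (space M - rise 0 (t + real n * \<mu> + \<mu>)) \<le> prob (space M - rise 0 (t + real n * \<mu>))"
    using assms by (intro prob_no_rise_step) auto
  from mult_left_mono[OF this, of "?r ^ n"]
  have "?r ^ Suc n * prob (space M - rise 0 (t + real (Suc n) * \<mu>))
      \<le> ?r ^ n * prob (space M - rise 0 (t + real n * \<mu>))"
    by (simp add: algebra_simps)
  with Suc.IH show ?case by linarith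
qed simp

lemma exists_prob_no_rise_gt_0:
  assumes "AE \<omega> in M. bdd_above (range (walk \<omega>))"
  shows "\<exists>K::nat. prob (space M - rise 0 K) > 0"
proof (rule ccontr)
  assume "\<not> (\<exists>K::nat. prob (space M - rise 0 K) > 0)"
  then have "prob (space M - rise 0 (real K)) = 0" for K
    by (meson antisym measure_nonneg not_less)
  then have "space M - rise 0 (real K) \<in> null_sets M" for K
    by (intro null_setsI) (auto simp: emeasure_eq_measure)
  then have "AE \<omega> in M. \<forall>K::nat. \<omega> \<notin> space M - rise 0 (real K)"
    unfolding AE_all_countable by (blast intro: AE_not_in)
  moreover have "AE \<omega> in M. \<exists>K::nat. \<omega> \<in> space M - rise 0 (real K)"
    using assms AE_space
  proof eventually_elim
    case (elim \<omega>)
    then obtain B where "\<forall>k. Sdrift X \<mu> k \<omega> \<le> B" by (auto simp: bdd_above_def)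
    moreover obtain K :: nat where "B < real K" using reals_Archimedean2 by blast
    ultimately have "\<forall>k. Sdrift X \<mu> k \<omega> \<le> real K" by (meson less_imp_le order_trans)
    then show ?case using elim by (auto simp: rise_def not_less)
  qed
  ultimately have "AE \<omega> in M. False" by eventually_elim blast
  then show False by simp
qed

lemma prob_rise_less_1:
  assumes bdd: "AE \<omega> in M. bdd_above (range (walk \<omega>))"
    and "integrable M (X 1)" and "expectation (X 1) = 0" and "\<mu> > 0" and "t \<ge> 0"
  shows "prob (rise 0 t) < 1"
proof -
  let ?r = "prob {\<omega>\<in>space M. X 1 \<omega> \<le> 0}"
  obtain K :: nat where K: "prob (space M - rise 0 K) > 0"
    using exists_prob_no_rise_gt_0[OF bdd] by blast
  obtain n :: nat where "real K / \<mu> < real n"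
    using reals_Archimedean2 by blast
  then have "real K \<le> t + real n * \<mu>"
    using \<open>\<mu> > 0\<close> \<open>t \<ge> 0\<close> by (simp add: field_simps)
  have "0 < ?r ^ n * prob (space M - rise 0 K)"
    using K prob_nonpos_gt_0[OF assms(2,3)] by simp
  also have "\<dots> \<le> ?r ^ n * prob (space M - rise 0 (t + real n * \<mu>))"
    using \<open>real K \<le> t + real n * \<mu>\<close> by (intro mult_left_mono prob_no_rise_mono) auto
  also have "\<dots> \<le> prob (space M - rise 0 t)"
    using assms by (intro prob_no_rise_power) auto
  finally show ?thesis by (simp add: prob_compl)
qed

text \<open>Whether descent_iter ends at e depends only on the walk up to time e, hence only on
  steps_upto e; frozen_walk e y is the walk computed from y = (X_1, ..., X_e).\<close>

definition frozen_walk :: "nat \<Rightarrow> (nat \<Rightarrow> real) \<Rightarrow> nat \<Rightarrow> real" where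
  "frozen_walk e y k = (\<Sum>i\<in>{1..min k e}. y i) - real (min k e) * \<mu>"

definition descent_vectors :: "real \<Rightarrow> real \<Rightarrow> nat \<Rightarrow> nat \<Rightarrow> nat \<Rightarrow> (nat \<Rightarrow> real) set" where
  "descent_vectors L m d K e =
     {y \<in> space (\<Pi>\<^sub>M i\<in>{1..e}. borel). descent_iter (frozen_walk e y) L m d K = Some e}"

lemma sets_descent_vectors: "descent_vectors L m d K e \<in> sets (\<Pi>\<^sub>M i\<in>{1..e}. borel)"
proof -
  have "(\<lambda>y. frozen_walk e y k) \<in> borel_measurable (\<Pi>\<^sub>M i\<in>{1..e}. borel)" for k
    unfolding frozen_walk_def
    by (intro borel_measurable_diff borel_measurable_sum borel_measurable_const)
       (rule measurable_component_singleton, auto)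
  then have "(\<lambda>y. descent_iter (frozen_walk e y) L m d K) \<in> measurable (\<Pi>\<^sub>M i\<in>{1..e}. borel) (count_space UNIV)"
    by (rule measurable_descent_iter)
  moreover have "descent_vectors L m d K e
      = (\<lambda>y. descent_iter (frozen_walk e y) L m d K) -` {Some e} \<inter> space (\<Pi>\<^sub>M i\<in>{1..e}. borel)"
    unfolding descent_vectors_def by blast
  ultimately show ?thesis by (metis measurable_sets sets_count_space UNIV_I Pow_UNIV)
qed

lemma descent_iter_event:
  "{\<omega>\<in>space M. descent_iter (walk \<omega>) L m d K = Some e} = steps_upto e -` descent_vectors L m d K e \<inter> space M"
proof -
  have frozen: "frozen_walk e (steps_upto e \<omega>) k = Sdrift X \<mu> k \<omega>" if "k \<le> e" for k \<omega>
    using that by (simp add: frozen_walk_def Sdrift_def steps_upto_def min_def)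
  have "descent_iter (walk \<omega>) L m d K = Some e \<longleftrightarrow>
      descent_iter (frozen_walk e (steps_upto e \<omega>)) L m d K = Some e" for \<omega>
  proof
    assume "descent_iter (walk \<omega>) L m d K = Some e"
    then show "descent_iter (frozen_walk e (steps_upto e \<omega>)) L m d K = Some e"
      by (rule descent_iter_cong) (simp add: frozen)
  next
    assume "descent_iter (frozen_walk e (steps_upto e \<omega>)) L m d K = Some e"
    then show "descent_iter (walk \<omega>) L m d K = Some e"
      by (rule descent_iter_cong) (simp add: frozen)
  qed
  then show ?thesis
    using measurable_space[OF measurable_steps_upto] by (auto simp: descent_vectors_def)
qed

lemma prob_descent_iter_Suc_le:
  assumes "m \<ge> 0"
  shows "prob {\<omega>\<in>space M. descent_iter (walk \<omega>) L m d (Suc K) \<noteq> None}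
    \<le> prob (rise 0 m) * prob {\<omega>\<in>space M. descent_iter (walk \<omega>) L m d K \<noteq> None}"
proof -
  define F where "F e = {\<omega>\<in>space M. descent_iter (walk \<omega>) L m d K = Some e}" for e
  have F: "F e \<in> events" for e
    unfolding F_def descent_iter_event by (rule measurable_sets[OF measurable_steps_upto sets_descent_vectors])
  have disj: "disjoint_family F" "disjoint_family (\<lambda>e. F e \<inter> rise e m)"
    unfolding disjoint_family_on_def F_def by auto
  have "{\<omega>\<in>space M. descent_iter (walk \<omega>) L m d (Suc K) \<noteq> None} \<subseteq> (\<Union>e. F e \<inter> rise e m)"
  proof
    fix \<omega> assume "\<omega> \<in> {\<omega>\<in>space M. descent_iter (walk \<omega>) L m d (Suc K) \<noteq> None}"
    then obtain e e' where \<omega>: "\<omega> \<in> F e" "descent_step (walk \<omega>) L m e = Some e'"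
      by (auto simp: F_def split: Option.bind_splits)
    then obtain u where "hit e (\<lambda>n. Sdrift X \<mu> n \<omega> - Sdrift X \<mu> e \<omega> > m) = enat u"
      by (auto elim: descent_step_SomeE)
    from hit_eq_enatD(1,2)[OF this] have "Sdrift X \<mu> (e + (u - e)) \<omega> - Sdrift X \<mu> e \<omega> > m"
      by simp
    then show "\<omega> \<in> (\<Union>e. F e \<inter> rise e m)" using \<omega>(1) by (auto simp: rise_def F_def)
  qed
  then have "prob {\<omega>\<in>space M. descent_iter (walk \<omega>) L m d (Suc K) \<noteq> None} \<le> prob (\<Union>e. F e \<inter> rise e m)"
    using F by (intro finite_measure_mono) auto
  also have "\<dots> = (\<Sum>e. prob (F e \<inter> rise e m))"
    using F disj by (intro sums_unique finite_measure_UNION) auto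
  also have "\<dots> = (\<Sum>e. prob (F e) * prob (rise 0 m))"
    using prob_steps_upto_Int_rise[OF sets_descent_vectors assms] by (simp add: F_def descent_iter_event)
  also have "\<dots> = prob (\<Union>e. F e) * prob (rise 0 m)"
    using F disj by (intro sums_unique[symmetric] sums_mult2 finite_measure_UNION) auto
  also have "(\<Union>e. F e) = {\<omega>\<in>space M. descent_iter (walk \<omega>) L m d K \<noteq> None}"
    by (auto simp: F_def)
  finally show ?thesis by (simp add: mult.commute)
qed

lemma prob_descent_iter_le_power:
  assumes "m \<ge> 0"
  shows "prob {\<omega>\<in>space M. descent_iter (walk \<omega>) L m d K \<noteq> None} \<le> prob (rise 0 m) ^ K"
proof (induction K)
  case (Suc K)
  have "prob {\<omega>\<in>space M. descent_iter (walk \<omega>) L m d (Suc K) \<noteq> None}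
      \<le> prob (rise 0 m) * prob {\<omega>\<in>space M. descent_iter (walk \<omega>) L m d K \<noteq> None}"
    by (rule prob_descent_iter_Suc_le[OF assms])
  also have "\<dots> \<le> prob (rise 0 m) * prob (rise 0 m) ^ K"
    using Suc.IH by (intro mult_left_mono) auto
  finally show ?case by simp
qed simp

lemma AE_descent_iter_eq_None:
  assumes "m \<ge> 0" and "prob (rise 0 m) < 1"
  shows "AE \<omega> in M. \<exists>K. descent_iter (walk \<omega>) L m d K = None"
proof -
  define N where "N K = {\<omega>\<in>space M. descent_iter (walk \<omega>) L m d K \<noteq> None}" for K
  have "(\<lambda>\<omega>. descent_iter (walk \<omega>) L m d K) \<in> measurable M (count_space UNIV)" for K
    by (rule measurable_descent_iter) simp
  from measurable_sets[OF this, of "UNIV - {None}"] have N: "N K \<in> events" for K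
    unfolding N_def vimage_def Int_def by (simp add: conj_commute)
  have "prob (\<Inter>K. N K) \<le> prob (rise 0 m) ^ K" for K
    using finite_measure_mono[of "\<Inter>K. N K" "N K"] N prob_descent_iter_le_power[OF assms(1), of L d K]
    unfolding N_def by (meson INT_lower UNIV_I order_trans)
  moreover have "(\<lambda>K. prob (rise 0 m) ^ K) \<longlonglongrightarrow> 0"
    using assms(2) by (intro LIMSEQ_power_zero) simp
  ultimately have "prob (\<Inter>K. N K) \<le> 0"
    by (intro LIMSEQ_le_const) auto
  then have "(\<Inter>K. N K) \<in> null_sets M"
    using N measure_nonneg[of M "\<Inter>K. N K"]
    by (intro null_setsI) (auto simp: emeasure_eq_measure simp del: measure_nonneg)
  then show ?thesis by (rule AE_I') (auto simp: N_def)
qed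

lemma AE_frequently_Utime_infinity:
  assumes "m \<ge> 0" and "prob (rise 0 m) < 1"
  shows "AE \<omega> in M. \<exists>\<^sub>\<infinity>n. Utime (walk \<omega>) L m n = \<infinity>"
proof -
  have "AE \<omega> in M. \<forall>d. \<exists>K. descent_iter (walk \<omega>) L m d K = None"
    using AE_descent_iter_eq_None[OF assms] by (simp add: AE_all_countable)
  then show ?thesis
  proof (rule AE_mp[OF _ AE_I2[OF impI]])
    fix \<omega> assume none: "\<forall>d. \<exists>K. descent_iter (walk \<omega>) L m d K = None"
    show "\<exists>\<^sub>\<infinity>n. Utime (walk \<omega>) L m n = \<infinity>"
    proof (rule ccontr)
      assume "\<not> (\<exists>\<^sub>\<infinity>n. Utime (walk \<omega>) L m n = \<infinity>)"
      then obtain J where J: "\<forall>j\<ge>Suc J. Utime (walk \<omega>) L m j \<noteq> \<infinity>"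
        unfolding not_INFM MOST_nat by (auto simp: Suc_le_eq)
      then obtain d where "Dtime (walk \<omega>) L m (Suc J) = enat d"
        using Dtime_finite_if_Utime_finite by blast
      from Dtime_eq_descent_iter[OF _ this J] none show False by (metis option.discI nat.discI)
    qed
  qed
qed

end

theorem proposition1:
  fixes M :: "'a measure" and X :: "nat \<Rightarrow> 'a \<Rightarrow> real"
    and \<beta> \<mu> m L :: real
  assumes "prob_space M"
    and "prob_space.indep_vars M (\<lambda>_. borel) X {1..}"
    and "\<And>k. k \<ge> 1 \<Longrightarrow> distr M borel (X k) = distr M borel (X 1)"
    and "integrable M (X 1)"
    and "prob_space.expectation M (X 1) = 0"
    and "\<beta> > 1"
    and "integrable M (\<lambda>\<omega>. \<bar>X 1 \<omega>\<bar> powr \<beta>)"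
    and "\<mu> > 0" and "m > 0" and "L \<ge> 1"
    and "measure M {\<omega>\<in>space M. ereal m < Msup X \<mu> \<omega> \<and> Msup X \<mu> \<omega> \<le> ereal ((L + 1) * m)} > 0"
  shows "(AE \<omega> in M. (\<lambda>n. Dtime (\<lambda>k. Sdrift X \<mu> k \<omega>) L m n) \<longlonglongrightarrow> \<infinity>)
    \<and> (\<forall>n\<ge>1. AE \<omega> in M. Dtime (\<lambda>k. Sdrift X \<mu> k \<omega>) L m n < \<infinity>)
    \<and> (AE \<omega> in M. \<exists>\<^sub>\<infinity>n. Utime (\<lambda>k. Sdrift X \<mu> k \<omega>) L m n = \<infinity>)"
proof -
  interpret iid_walk M X \<mu>
    using assms(1-3) by (intro iid_walk.intro iid_sequence.intro iid_sequence_axioms.intro)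
  have "L * m > 0" using assms(9,10) by simp
  have "AE \<omega> in M. (\<forall>y a. \<exists>n\<ge>a. walk \<omega> n < y) \<and> bdd_above (range (walk \<omega>))"
    using assms(4-8) by (rule AE_walk_unbounded_below_bdd_above)
  then have below: "AE \<omega> in M. \<forall>y a. \<exists>n\<ge>a. walk \<omega> n < y"
    and above: "AE \<omega> in M. bdd_above (range (walk \<omega>))"
    by (simp_all add: AE_conj_iff)
  have "prob (rise 0 m) < 1"
    using above assms(4,5,8,9) by (intro prob_rise_less_1) auto
  then have "AE \<omega> in M. \<exists>\<^sub>\<infinity>n. Utime (walk \<omega>) L m n = \<infinity>"
    using \<open>m > 0\<close> by (intro AE_frequently_Utime_infinity) auto
  moreover have "AE \<omega> in M. (\<lambda>n. Dtime (walk \<omega>) L m n) \<longlonglongrightarrow> \<infinity>"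
    using below by eventually_elim (intro Dtime_tendsto_infinity \<open>L * m > 0\<close>; simp)
  moreover have "AE \<omega> in M. Dtime (walk \<omega>) L m n < \<infinity>" if "n \<ge> 1" for n
    using below by eventually_elim (intro Dtime_finite \<open>L * m > 0\<close> that; simp)
  ultimately show ?thesis by blast
qed

end
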